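(* Let $n\ge1$, let $\Theta$ be a nonzero complex skew-symmetric $n\times n$ matrix, and let $\Gamma$ be a discrete subgroup of $\mathrm{Aut}(\mathcal H,J_\Theta)$. Suppose there is $\phi\in\Gamma$ of the form $\phi(z)=(tz^0+is,\ t^{1/2}Az')$ with $0<t<1$, $s\in\mathbb R$, $A\in U_\Theta$. Then every $\psi\in\Gamma$ is of the form $\psi(z)=(az^0+ib,\ a^{1/2}Bz')$ with $a>0$, $b\in\mathbb R$, $B\in U_\Theta$ (i.e. with $w'=0$ in the normal form below), and $b(1-t)=s(1-a)$; in particular $\frac{b}{1-a}=\frac{s}{1-t}$ whenever $a\neq1$.
   Context: Write points of $\mathbb C^{n+1}$ as $z=(z^0,z')$, $z'=(z^1,\dots,z^n)$. $\mathcal H=\{(z^0,z')\in\mathbb C\times\mathbb C^n:\ \mathrm{Re}\,z^0+\|z'\|^2<0\}$ (Siegel half space). For a complex skew-symmetric $n\times n$ matrix $\Theta=(\Theta_{\alpha\beta})$, $J_\Theta$ is the almost complex structure on $\mathbb C^{n+1}$ $J_\Theta=i\frac{\partial}{\partial z^0}\otimes dz^0+\sum_\alpha\big(i\frac{\partial}{\partial z^\alpha}+2\sum_\beta\Theta_{\alpha\beta}z^\beta\frac{\partial}{\partial \bar z^0}\big)\otimes dz^\alpha-i\frac{\partial}{\partial \bar z^0}\otimes d\bar z^0+\sum_\alpha\big(-i\frac{\partial}{\partial \bar z^\alpha}+2\sum_\beta\overline{\Theta_{\alpha\beta}}\bar z^\beta\frac{\partial}{\partial z^0}\big)\otimes d\bar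 z^\alpha$ (integrable iff $\Theta=0$). $\mathrm{Aut}(\mathcal H,J_\Theta)$ is the group of $J_\Theta$-holomorphic diffeomorphisms of $\mathcal H$ with compact-open topology. $U_\Theta=\{A\in\mathbb C^{n\times n}: A^t\bar A=I,\ A^t\Theta A=\Theta\}$, a compact group. For $w'\in\mathbb C^n$, $h_{w'}(z')=-\|w'\|^2-2\langle z',\bar w'\rangle+i\big(\sum\Theta_{\alpha\beta}z^\alpha w^\beta+\sum\overline{\Theta_{\alpha\beta}}\,\bar z^\alpha\bar w^\beta\big)$, where $\langle z',\bar w'\rangle=\sum_\alpha z^\alpha\bar w^\alpha$. It is known (and may be assumed) that for $\Theta\neq0$ every $\phi\in\mathrm{Aut}(\mathcal H,J_\Theta)$ can be written uniquely as $\phi(z)=(tz^0+h_{w'}(z')+is,\ t^{1/2}Az'+w')$ with $t>0$, $s\in\mathbb R$, $w'\in\mathbb C^n$, $A\in U_\Theta$, and every such map is an automorphism. *)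

theory Defs
  imports "HOL-Analysis.Analysis"
begin

text \<open>Points of C^(n+1) are pairs (z0, z') with z' :: complex^'n, 'n a finite index type
  of cardinality n (n >= 1 automatically).\<close>

definition siegel :: "(complex \<times> (complex^'n)) set" where
  "siegel = {(z0, z'). Re z0 + (norm z')\<^sup>2 < 0}"

definition skew_sym :: "complex^'n^'n \<Rightarrow> bool" where
  "skew_sym \<Theta> \<longleftrightarrow> transpose \<Theta> = - \<Theta>"

definition cnj_mat :: "complex^'n^'n \<Rightarrow> complex^'n^'n" where
  "cnj_mat A = (\<chi> i j. cnj (A $ i $ j))"

definition U_Theta :: "complex^'n^'n \<Rightarrow> (complex^'n^'n) set" where
  "U_Theta \<Theta> = {A. transpose A ** cnj_mat A = mat 1 \<and> transpose A ** \<Theta> ** A = \<Theta>}"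

definition h_w :: "complex^'n^'n \<Rightarrow> complex^'n \<Rightarrow> complex^'n \<Rightarrow> complex" where
  "h_w \<Theta> w z = - complex_of_real ((norm w)\<^sup>2)
     - 2 * (\<Sum>\<alpha>\<in>UNIV. z $ \<alpha> * cnj (w $ \<alpha>))
     + \<i> * ((\<Sum>\<alpha>\<in>UNIV. \<Sum>\<beta>\<in>UNIV. \<Theta> $ \<alpha> $ \<beta> * z $ \<alpha> * w $ \<beta>)
          + (\<Sum>\<alpha>\<in>UNIV. \<Sum>\<beta>\<in>UNIV. cnj (\<Theta> $ \<alpha> $ \<beta>) * cnj (z $ \<alpha>) * cnj (w $ \<beta>)))"

definition autmap :: "complex^'n^'n \<Rightarrow> real \<Rightarrow> real \<Rightarrow> complex^'n \<Rightarrow> complex^'n^'n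
    \<Rightarrow> complex \<times> (complex^'n) \<Rightarrow> complex \<times> (complex^'n)" where
  "autmap \<Theta> t s w A = (\<lambda>(z0, z'). (complex_of_real t * z0 + h_w \<Theta> w z' + \<i> * complex_of_real s,
                               complex_of_real (sqrt t) *s (A *v z') + w))"

text \<open>Aut(H, J_Theta) for Theta nonzero, via the (assumed) normal form theorem.\<close>
definition Aut :: "complex^'n^'n \<Rightarrow> (complex \<times> (complex^'n) \<Rightarrow> complex \<times> (complex^'n)) set" where
  "Aut \<Theta> = {autmap \<Theta> t s w A | t s w A. t > 0 \<and> A \<in> U_Theta \<Theta>}"

definition is_subgroup_Aut :: "complex^'n^'n \<Rightarrow> (complex \<times> (complex^'n) \<Rightarrow> complex \<times> (complex^'n)) set \<Rightarrow> bool" where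
  "is_subgroup_Aut \<Theta> \<Gamma> \<longleftrightarrow> \<Gamma> \<subseteq> Aut \<Theta> \<and> id \<in> \<Gamma> \<and>
     (\<forall>f\<in>\<Gamma>. \<forall>g\<in>\<Gamma>. f \<circ> g \<in> \<Gamma>) \<and> (\<forall>f\<in>\<Gamma>. inv f \<in> \<Gamma>)"

text \<open>Discreteness in the compact-open topology on maps of H: every element gamma has a basic
  compact-open neighbourhood (finite intersection of sets {f. f ` K \<subseteq> U}, K \<subseteq> H compact,
  U open) meeting Gamma only in maps equal to gamma on H.\<close>
definition co_discrete :: "('a::topological_space) set \<Rightarrow> ('a \<Rightarrow> 'b::topological_space) set \<Rightarrow> bool" where
  "co_discrete H \<Gamma> \<longleftrightarrow> (\<forall>\<gamma>\<in>\<Gamma>. \<exists>P. finite P \<and>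
      (\<forall>(K, U)\<in>P. compact K \<and> K \<subseteq> H \<and> open U \<and> \<gamma> ` K \<subseteq> U) \<and>
      (\<forall>\<psi>\<in>\<Gamma>. (\<forall>(K, U)\<in>P. \<psi> ` K \<subseteq> U) \<longrightarrow> (\<forall>x\<in>H. \<psi> x = \<gamma> x)))"

end

theory Submission
  imports Defs
begin

text \<open>Let \<open>\<phi> = autmap \<Theta> t s 0 A\<close> and \<open>\<psi> = autmap \<Theta> a b w B\<close> be in \<open>\<Gamma>\<close>. The conjugates
  \<open>\<phi>\<^sup>m \<psi> \<phi>\<^sup>-\<^sup>m\<close> lie in \<open>\<Gamma>\<close> and are given by one formula depending continuously on the
  bounded parameter \<open>(t\<^sup>m\<^sup>/\<^sup>2, s(1 - t\<^sup>m)/(1 - t), A\<^sup>m, A\<^sup>-\<^sup>m)\<close>, in which \<open>w\<close> and the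
  \<open>z'\<close>-dependence of \<open>h_w\<close> only occur multiplied by \<open>t\<^sup>m\<^sup>/\<^sup>2\<close>. By compactness the parameters
  for some \<open>m < m'\<close> are arbitrarily close, so two such conjugates (and their inverses, which have
  the same shape) are uniformly close on a large ball, and discreteness makes them agree on the Siegel
  domain. At the point \<open>(-1, 0)\<close> the second coordinates \<open>t\<^sup>m\<^sup>/\<^sup>2 A\<^sup>m w\<close> for \<open>m\<close> and \<open>m'\<close> have
  different norms unless \<open>w = 0\<close>, and the imaginary part of the first coordinate,
  \<open>(1 - a) s (1 - t\<^sup>m)/(1 - t) + b t\<^sup>m\<close>, is affine in \<open>t\<^sup>m\<close>, so its slope
  \<open>b - (1 - a) s/(1 - t)\<close> vanishes.\<close>

section \<open>Discrete groups of maps\<close>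

lemma co_discrete_near_id:
  fixes \<Gamma> :: "('a::real_normed_vector \<Rightarrow> 'a) set"
  assumes "co_discrete H \<Gamma>" "id \<in> \<Gamma>"
  obtains \<epsilon> R where "\<epsilon> > 0"
    "\<And>g x. g \<in> \<Gamma> \<Longrightarrow> (\<And>z. norm z \<le> R \<Longrightarrow> norm (g z - z) \<le> \<epsilon>) \<Longrightarrow> x \<in> H \<Longrightarrow> g x = x"
proof -
  obtain P where P: "finite P" "\<forall>(K, U)\<in>P. compact K \<and> K \<subseteq> H \<and> open U \<and> id ` K \<subseteq> U"
    and discrete: "\<forall>g\<in>\<Gamma>. (\<forall>(K, U)\<in>P. g ` K \<subseteq> U) \<longrightarrow> (\<forall>x\<in>H. g x = id x)"
    using bspec[OF assms(1)[unfolded co_discrete_def] assms(2)] by blast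
  have "\<exists>e B. e > 0 \<and> (\<forall>x\<in>fst p. ball x e \<subseteq> snd p \<and> norm x \<le> B)" if "p \<in> P" for p
  proof -
    have KU: "compact (fst p)" "open (snd p)" "fst p \<subseteq> snd p"
      using P(2) that by (auto simp: case_prod_beta)
    obtain e where "e > 0" "(\<Union>x\<in>fst p. ball x e) \<subseteq> snd p"
      using compact_subset_open_imp_ball_epsilon_subset[OF KU] by blast
    moreover obtain B where "\<forall>x\<in>fst p. norm x \<le> B"
      using compact_imp_bounded[OF KU(1)] unfolding bounded_iff by blast
    ultimately show ?thesis by blast
  qed
  then obtain e B where eB: "\<And>p. p \<in> P \<Longrightarrow> e p > 0 \<and> (\<forall>x\<in>fst p. ball x (e p) \<subseteq> snd p \<and> norm x \<le> B p)"
    by metis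
  define \<epsilon> where "\<epsilon> = Min (insert 1 (e ` P)) / 2"
  define R where "R = Max (insert 0 (B ` P))"
  have "0 < Min (insert 1 (e ` P))" using P(1) eB by (subst Min_gr_iff) auto
  then have "\<epsilon> > 0" by (simp add: \<epsilon>_def)
  have \<epsilon>_less: "\<epsilon> < e p" if "p \<in> P" for p
  proof -
    have "Min (insert 1 (e ` P)) \<le> e p" using P(1) that by (intro Min_le) auto
    then show ?thesis using \<open>0 < Min (insert 1 (e ` P))\<close> by (simp add: \<epsilon>_def)
  qed
  have R_ge: "B p \<le> R" if "p \<in> P" for p
    using P(1) that by (simp add: R_def)
  have fixes_H: "g x = x" if g: "g \<in> \<Gamma>" and close: "\<And>z. norm z \<le> R \<Longrightarrow> norm (g z - z) \<le> \<epsilon>"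
    and "x \<in> H" for g x
  proof -
    have "g y \<in> U" if KU: "(K, U) \<in> P" and "y \<in> K" for K U y
    proof -
      have "norm y \<le> R" using eB[OF KU] R_ge[OF KU] \<open>y \<in> K\<close> by force
      then have "g y \<in> ball y (e (K, U))"
        using close[of y] \<epsilon>_less[OF KU] by (simp add: dist_norm norm_minus_commute)
      moreover have "ball y (e (K, U)) \<subseteq> U" using eB[OF KU] \<open>y \<in> K\<close> by simp
      ultimately show ?thesis by blast
    qed
    then show ?thesis using discrete g \<open>x \<in> H\<close> by fastforce
  qed
  show ?thesis using fixes_H by (rule that[OF \<open>\<epsilon> > 0\<close>])
qed

lemma bounded_range_close_terms:
  fixes X :: "nat \<Rightarrow> 'a::heine_borel"
  assumes "bounded (range X)" "\<delta> > 0"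
  obtains m m' where "m < m'" "dist (X m) (X m') < \<delta>"
proof -
  obtain l r where "strict_mono r" and "(X \<circ> r) \<longlonglongrightarrow> l"
    using bounded_imp_convergent_subsequence[OF assms(1)] by blast
  have "Cauchy (X \<circ> r)"
    by (rule LIMSEQ_imp_Cauchy) fact
  then obtain M where M: "\<forall>i\<ge>M. \<forall>j\<ge>M. dist ((X \<circ> r) i) ((X \<circ> r) j) < \<delta>"
    using assms(2) unfolding Cauchy_def by blast
  show ?thesis
  proof (rule that)
    show "r M < r (Suc M)" using \<open>strict_mono r\<close> by (simp add: strict_mono_less)
    show "dist (X (r M)) (X (r (Suc M))) < \<delta>" using M by simp
  qed
qed

lemma co_discrete_family_agree:
  fixes \<Gamma> :: "('a::{real_normed_vector, heine_borel} \<Rightarrow> 'a) set"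
    and F G :: "'p::{real_normed_vector, heine_borel} \<Rightarrow> 'a \<Rightarrow> 'a" and X :: "nat \<Rightarrow> 'p"
  assumes discrete: "co_discrete H \<Gamma>" and "id \<in> \<Gamma>" and comp: "\<And>f g. f \<in> \<Gamma> \<Longrightarrow> g \<in> \<Gamma> \<Longrightarrow> f \<circ> g \<in> \<Gamma>"
    and contF: "continuous_on UNIV (\<lambda>(p, z). F p z)" and contG: "continuous_on UNIV (\<lambda>(p, z). G p z)"
    and "bounded (range X)"
    and FG: "\<And>m. F (X m) \<in> \<Gamma>" "\<And>m. G (X m) \<in> \<Gamma>"
      "\<And>m. G (X m) \<circ> F (X m) = id" "\<And>m. F (X m) \<circ> G (X m) = id"
  obtains m m' where "m < m'" "\<And>x. x \<in> H \<Longrightarrow> F (X m') x = F (X m) x"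
proof -
  obtain \<epsilon> R where "\<epsilon> > 0"
    and near_id: "\<And>g x. g \<in> \<Gamma> \<Longrightarrow> (\<And>z. norm z \<le> R \<Longrightarrow> norm (g z - z) \<le> \<epsilon>) \<Longrightarrow> x \<in> H \<Longrightarrow> g x = x"
    using co_discrete_near_id[OF discrete \<open>id \<in> \<Gamma>\<close>] by metis
  define S where "S = closure (range X)"
  have "compact S" unfolding S_def using \<open>bounded (range X)\<close> by simp
  then have "bounded ((\<lambda>(p, z). F p z) ` (S \<times> cball 0 R))"
    by (intro compact_imp_bounded compact_continuous_image continuous_on_subset[OF contF]
        compact_Times compact_cball) auto
  then obtain R' where "\<forall>y\<in>(\<lambda>(p, z). F p z) ` (S \<times> cball 0 R). norm y \<le> R'"
    unfolding bounded_iff by blast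
  then have R': "norm (F p z) \<le> R'" if "p \<in> S" "norm z \<le> R" for p z
    using that by simp
  have "uniformly_continuous_on (S \<times> cball 0 R') (\<lambda>(p, z). G p z)"
    by (intro compact_uniformly_continuous continuous_on_subset[OF contG] compact_Times
        \<open>compact S\<close> compact_cball) auto
  then obtain \<delta>' where "\<delta>' > 0" and ucG: "\<forall>x\<in>S \<times> cball 0 R'. \<forall>x'\<in>S \<times> cball 0 R'.
      dist x' x < \<delta>' \<longrightarrow> dist ((\<lambda>(p, z). G p z) x') ((\<lambda>(p, z). G p z) x) < \<epsilon>"
    unfolding uniformly_continuous_on_def using \<open>\<epsilon> > 0\<close> by blast
  have "uniformly_continuous_on (S \<times> cball 0 R) (\<lambda>(p, z). F p z)"
    by (intro compact_uniformly_continuous continuous_on_subset[OF contF] compact_Times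
        \<open>compact S\<close> compact_cball) auto
  then obtain \<delta> where "\<delta> > 0" and ucF: "\<forall>x\<in>S \<times> cball 0 R. \<forall>x'\<in>S \<times> cball 0 R.
      dist x' x < \<delta> \<longrightarrow> dist ((\<lambda>(p, z). F p z) x') ((\<lambda>(p, z). F p z) x) < \<delta>'"
    unfolding uniformly_continuous_on_def using \<open>\<delta>' > 0\<close> by blast
  obtain m m' where "m < m'" "dist (X m) (X m') < \<delta>"
    using bounded_range_close_terms[OF \<open>bounded (range X)\<close> \<open>\<delta> > 0\<close>] by blast
  have X_in_S: "X k \<in> S" for k
    unfolding S_def by (rule subsetD[OF closure_subset rangeI])
  have left_inverse: "(G (X m) \<circ> F (X m')) x = x" if "x \<in> H" for x
  proof (rule near_id[OF comp[OF FG(2) FG(1)] _ that])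
    fix z :: 'a assume "norm z \<le> R"
    then have "(X m, z) \<in> S \<times> cball 0 R" "(X m', z) \<in> S \<times> cball 0 R"
      using X_in_S by auto
    moreover have "dist (X m', z) (X m, z) < \<delta>"
      using \<open>dist (X m) (X m') < \<delta>\<close> by (simp add: dist_Pair_Pair dist_commute)
    ultimately have "dist (F (X m') z) (F (X m) z) < \<delta>'"
      using ucF by (metis case_prod_conv)
    then have "dist (X m, F (X m') z) (X m, F (X m) z) < \<delta>'"
      by (simp add: dist_Pair_Pair)
    moreover have "(X m, F (X m) z) \<in> S \<times> cball 0 R'" "(X m, F (X m') z) \<in> S \<times> cball 0 R'"
      using \<open>norm z \<le> R\<close> R' X_in_S by auto
    ultimately have "dist (G (X m) (F (X m') z)) (G (X m) (F (X m) z)) < \<epsilon>"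
      using ucG by (metis case_prod_conv)
    then show "norm ((G (X m) \<circ> F (X m')) z - z) \<le> \<epsilon>"
      using FG(3)[of m] by (simp add: fun_eq_iff dist_norm)
  qed
  show ?thesis
  proof (rule that[OF \<open>m < m'\<close>])
    fix x assume "x \<in> H"
    then have "F (X m) (G (X m) (F (X m') x)) = F (X m) x" using left_inverse by simp
    then show "F (X m') x = F (X m) x" using FG(4)[of m] by (simp add: fun_eq_iff)
  qed
qed

lemma conj_inverse:
  assumes "bij p" "f \<circ> g = id"
  shows "(p \<circ> f \<circ> inv p) \<circ> (p \<circ> g \<circ> inv p) = id"
  using assms by (simp add: fun_eq_iff bij_is_inj bij_is_surj surj_f_inv_f pointfree_idE)

section \<open>Unitary matrices\<close>

lemma matrix_vector_mult_scaleR_right: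
  fixes M :: "'a::real_algebra_1^'n^'m"
  shows "M *v (c *\<^sub>R v) = c *\<^sub>R (M *v v)"
  by (simp add: vec_eq_iff matrix_vector_mult_def scaleR_sum_right)

lemma norm_vec_power2: "(norm x)\<^sup>2 = (\<Sum>i\<in>UNIV. (norm (x$i))\<^sup>2)"
  by (simp add: norm_vec_def L2_set_def sum_nonneg)

lemma norm_power2_complex_vec:
  "complex_of_real ((norm x)\<^sup>2) = (\<Sum>i\<in>UNIV. x$i * cnj (x$i))"
  by (simp only: norm_vec_power2 of_real_sum complex_norm_square)

text \<open>The complex conjugate of \<open>A\<^sup>* A = 1\<close>, written in the shape used by \<open>U_Theta\<close>.\<close>

definition unitary :: "complex^'n^'n \<Rightarrow> bool" where
  "unitary A \<longleftrightarrow> transpose A ** cnj_mat A = mat 1"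

definition mat_adjoint :: "complex^'n^'n \<Rightarrow> complex^'n^'n" where
  "mat_adjoint A = cnj_mat (transpose A)"

lemma cnj_mat_mult: "cnj_mat (A ** B) = cnj_mat A ** cnj_mat B"
  by (simp add: cnj_mat_def matrix_matrix_mult_def vec_eq_iff)

lemma cnj_mat_mat_1: "cnj_mat (mat 1) = mat 1"
  by (simp add: cnj_mat_def mat_def vec_eq_iff)

lemma cnj_mat_cnj_mat [simp]: "cnj_mat (cnj_mat A) = A"
  by (simp add: cnj_mat_def vec_eq_iff)

lemma transpose_cnj_mat: "transpose (cnj_mat A) = cnj_mat (transpose A)"
  by (simp add: cnj_mat_def transpose_def vec_eq_iff)

lemma unitary_mat_1: "unitary (mat 1)"
  by (simp add: unitary_def cnj_mat_mat_1)

lemma unitary_mult: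
  assumes "unitary A" "unitary B"
  shows "unitary (A ** B)"
proof -
  have "transpose (A ** B) ** cnj_mat (A ** B)
      = transpose B ** (transpose A ** cnj_mat A) ** cnj_mat B"
    by (simp add: matrix_transpose_mul cnj_mat_mult matrix_mul_assoc)
  then show ?thesis using assms by (simp add: unitary_def)
qed

lemma unitary_adjoint_mult: "unitary A \<Longrightarrow> mat_adjoint A ** A = mat 1"
  by (metis unitary_def mat_adjoint_def cnj_mat_cnj_mat cnj_mat_mult cnj_mat_mat_1)

lemma unitary_mult_adjoint: "unitary A \<Longrightarrow> A ** mat_adjoint A = mat 1"
  using unitary_adjoint_mult matrix_left_right_inverse by blast

lemma unitary_mat_adjoint: "unitary A \<Longrightarrow> unitary (mat_adjoint A)"
  using arg_cong[OF unitary_mult_adjoint, of A cnj_mat]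
  by (simp add: unitary_def mat_adjoint_def cnj_mat_mult cnj_mat_mat_1 transpose_cnj_mat)

lemma unitary_column_inner:
  assumes "unitary A"
  shows "(\<Sum>i\<in>UNIV. A$i$j * cnj (A$i$k)) = (if j = k then 1 else 0)"
  using arg_cong[OF assms[unfolded unitary_def], of "\<lambda>M. M$j$k"]
  by (simp add: matrix_matrix_mult_def transpose_def cnj_mat_def mat_def)

lemma norm_unitary_mult:
  assumes "unitary A"
  shows "norm (A *v v) = norm v"
proof -
  have "(\<Sum>i\<in>UNIV. (A *v v)$i * cnj ((A *v v)$i))
      = (\<Sum>i\<in>UNIV. \<Sum>j\<in>UNIV. \<Sum>k\<in>UNIV. v$j * cnj (v$k) * (A$i$j * cnj (A$i$k)))"
    by (simp add: matrix_vector_mult_def sum_product mult_ac)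
  also have "\<dots> = (\<Sum>j\<in>UNIV. \<Sum>i\<in>UNIV. \<Sum>k\<in>UNIV. v$j * cnj (v$k) * (A$i$j * cnj (A$i$k)))"
    by (rule sum.swap)
  also have "\<dots> = (\<Sum>j\<in>UNIV. \<Sum>k\<in>UNIV. \<Sum>i\<in>UNIV. v$j * cnj (v$k) * (A$i$j * cnj (A$i$k)))"
    by (rule sum.cong[OF refl], rule sum.swap)
  also have "\<dots> = (\<Sum>j\<in>UNIV. v$j * cnj (v$j))"
    by (simp add: sum_distrib_left[symmetric] unitary_column_inner[OF assms] if_distrib cong: if_cong)
  finally have "(norm (A *v v))\<^sup>2 = (norm v)\<^sup>2"
    by (metis norm_power2_complex_vec of_real_eq_iff)
  then show ?thesis by simp
qed

lemma norm_unitary: "unitary A \<Longrightarrow> norm A = sqrt CARD('n)"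
  for A :: "complex^'n^'n"
proof -
  assume "unitary A"
  have "complex_of_real ((norm A)\<^sup>2) = (\<Sum>i\<in>UNIV. \<Sum>j\<in>UNIV. A$i$j * cnj (A$i$j))"
    by (simp only: norm_vec_power2 of_real_sum complex_norm_square)
  also have "\<dots> = (\<Sum>j\<in>UNIV. \<Sum>i\<in>UNIV. A$i$j * cnj (A$i$j))"
    by (rule sum.swap)
  also have "\<dots> = of_nat CARD('n)"
    by (simp add: unitary_column_inner[OF \<open>unitary A\<close>])
  finally show ?thesis
    by (metis norm_ge_zero of_real_of_nat_eq of_real_eq_iff real_sqrt_unique)
qed

fun mat_pow :: "'a::semiring_1^'n^'n \<Rightarrow> nat \<Rightarrow> 'a^'n^'n" where
  "mat_pow A 0 = mat 1"
| "mat_pow A (Suc m) = A ** mat_pow A m"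

lemma unitary_mat_pow: "unitary A \<Longrightarrow> unitary (mat_pow A m)"
  by (induction m) (simp_all add: unitary_mat_1 unitary_mult)

section \<open>The normal form\<close>

lemma U_Theta_unitary: "A \<in> U_Theta \<Theta> \<Longrightarrow> unitary A"
  by (simp add: U_Theta_def unitary_def)

lemma h_w_zero [simp]: "h_w \<Theta> 0 z = 0"
  by (simp add: h_w_def)

lemma autmap_apply:
  "autmap \<Theta> T S w M (z0, z') =
    (complex_of_real T * z0 + h_w \<Theta> w z' + \<i> * complex_of_real S, sqrt T *\<^sub>R (M *v z') + w)"
  by (simp add: autmap_def vec_eq_iff) (simp add: scaleR_conv_of_real)

lemma autmap_bij:
  assumes "T > 0" "unitary M"
  shows "bij (autmap \<Theta> T S w M)"
proof -
  define g' where "g' y' = (1 / sqrt T) *\<^sub>R (mat_adjoint M *v (y' - w))" for y'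
  define g where "g = (\<lambda>(y0, y'). ((y0 - h_w \<Theta> w (g' y') - \<i> * complex_of_real S) / complex_of_real T, g' y'))"
  have "autmap \<Theta> T S w M \<circ> g = id" "g \<circ> autmap \<Theta> T S w M = id"
    using assms
    by (auto simp: fun_eq_iff g_def g'_def autmap_apply matrix_vector_mult_scaleR_right
        matrix_vector_mul_assoc unitary_mult_adjoint unitary_adjoint_mult)
  then show ?thesis using o_bij by blast
qed

lemma autmap_one: "autmap \<Theta> 1 0 0 (mat 1) = id"
  by (simp add: fun_eq_iff autmap_apply)

lemma autmap_zero_comp:
  "autmap \<Theta> T S 0 M \<circ> autmap \<Theta> T' S' 0 M' = autmap \<Theta> (T * T') (T * S' + S) 0 (M ** M')"
  by (simp add: fun_eq_iff autmap_apply matrix_vector_mult_scaleR_right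
      matrix_vector_mul_assoc real_sqrt_mult algebra_simps)

lemma inv_autmap_zero:
  assumes "T > 0" "unitary M"
  shows "inv (autmap \<Theta> T S 0 M) = autmap \<Theta> (1 / T) (- S / T) 0 (mat_adjoint M)"
  by (rule inv_unique_comp)
     (use assms in \<open>simp_all add: autmap_zero_comp unitary_mult_adjoint unitary_adjoint_mult
        autmap_one\<close>)

lemma autmap_zero_funpow:
  assumes "T \<noteq> 1"
  shows "autmap \<Theta> T S 0 M ^^ m = autmap \<Theta> (T ^ m) (S * (1 - T ^ m) / (1 - T)) 0 (mat_pow M m)"
proof (induction m)
  case 0
  show ?case by (simp add: autmap_one)
next
  case (Suc m)
  have "T * (S * (1 - T ^ m) / (1 - T)) + S = S * (1 - T ^ Suc m) / (1 - T)"
    using assms by (simp add: field_simps)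
  then show ?case by (simp add: Suc autmap_zero_comp)
qed

section \<open>Conjugation by dilations\<close>

definition h_lin :: "complex^'n^'n \<Rightarrow> complex^'n \<Rightarrow> complex^'n \<Rightarrow> complex" where
  "h_lin \<Theta> w z = h_w \<Theta> w z + complex_of_real ((norm w)\<^sup>2)"

lemma h_w_eq_h_lin: "h_w \<Theta> w z = h_lin \<Theta> w z - complex_of_real ((norm w)\<^sup>2)"
  by (simp add: h_lin_def)

lemma h_lin_zero_left [simp]: "h_lin \<Theta> 0 z = 0"
  by (simp add: h_lin_def)

lemma h_lin_zero_right [simp]: "h_lin \<Theta> w 0 = 0"
  by (simp add: h_lin_def h_w_def)

lemma h_lin_scaleR: "h_lin \<Theta> w (c *\<^sub>R z) = complex_of_real c * h_lin \<Theta> w z"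
  by (simp add: h_lin_def h_w_def) (simp add: scaleR_conv_of_real sum_distrib_left algebra_simps)

text \<open>The conjugate of \<open>autmap \<Theta> a b w B\<close> by \<open>autmap \<Theta> (\<rho>\<^sup>2) S 0 M\<close>, where \<open>N\<close> stands for
  \<open>M\<^sup>-\<^sup>1\<close> (see \<open>autmap_conj\<close>). Unlike the composite itself, this formula stays continuous at
  \<open>\<rho> = 0\<close>, which is where the parameters of the conjugates by \<open>\<phi>\<^sup>m\<close> accumulate.\<close>

definition conj_autmap :: "complex^'n^'n \<Rightarrow> real \<Rightarrow> real \<Rightarrow> complex^'n \<Rightarrow> complex^'n^'n
    \<Rightarrow> real \<times> real \<times> (complex^'n^'n) \<times> (complex^'n^'n)
    \<Rightarrow> complex \<times> (complex^'n) \<Rightarrow> complex \<times> (complex^'n)" where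
  "conj_autmap \<Theta> a b w B = (\<lambda>(\<rho>, S, M, N) (z0, z').
     (complex_of_real a * z0 + \<i> * complex_of_real ((1 - a) * S + b * \<rho>\<^sup>2)
        - complex_of_real (\<rho>\<^sup>2 * (norm w)\<^sup>2) + complex_of_real \<rho> * h_lin \<Theta> w (N *v z'),
      sqrt a *\<^sub>R (M *v (B *v (N *v z'))) + \<rho> *\<^sub>R (M *v w)))"

lemma autmap_conj:
  assumes "\<rho> > 0"
  shows "autmap \<Theta> (\<rho>\<^sup>2) S 0 M \<circ> autmap \<Theta> a b w B \<circ> autmap \<Theta> (1 / \<rho>\<^sup>2) (- S / \<rho>\<^sup>2) 0 N
    = conj_autmap \<Theta> a b w B (\<rho>, S, M, N)"
  using assms
  by (auto simp: fun_eq_iff autmap_apply conj_autmap_def h_w_eq_h_lin h_lin_scaleR real_sqrt_divide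
      matrix_vector_mult_scaleR_right algebra_simps power2_eq_square)

lemma continuous_on_conj_autmap:
  "continuous_on UNIV (\<lambda>(p, z). conj_autmap \<Theta> a b w B p z)"
  unfolding conj_autmap_def h_lin_def h_w_def matrix_vector_mult_def case_prod_beta
  by (intro continuous_intros)

lemma conj_autmap_at_base_point:
  "conj_autmap \<Theta> a b w B (\<rho>, S, M, N) (-1, 0) =
    (- complex_of_real a + \<i> * complex_of_real ((1 - a) * S + b * \<rho>\<^sup>2)
       - complex_of_real (\<rho>\<^sup>2 * (norm w)\<^sup>2), \<rho> *\<^sub>R (M *v w))"
  by (simp add: conj_autmap_def)

lemma power2_sqrt_power: "0 \<le> t \<Longrightarrow> (sqrt t ^ m)\<^sup>2 = t ^ m"
  by (metis power_mult mult.commute real_sqrt_pow2)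

definition dilation_param :: "real \<Rightarrow> real \<Rightarrow> complex^'n^'n \<Rightarrow> nat
    \<Rightarrow> real \<times> real \<times> (complex^'n^'n) \<times> (complex^'n^'n)" where
  "dilation_param t s A m = (sqrt t ^ m, s * (1 - t ^ m) / (1 - t), mat_pow A m, mat_adjoint (mat_pow A m))"

lemma conj_funpow_autmap:
  assumes "0 < t" "t \<noteq> 1" "unitary A"
  shows "autmap \<Theta> t s 0 A ^^ m \<circ> autmap \<Theta> a b w B \<circ> inv (autmap \<Theta> t s 0 A ^^ m)
    = conj_autmap \<Theta> a b w B (dilation_param t s A m)"
  using assms autmap_conj[of "sqrt t ^ m" \<Theta> "s * (1 - t ^ m) / (1 - t)" "mat_pow A m"]
  by (simp add: autmap_zero_funpow dilation_param_def inv_autmap_zero unitary_mat_pow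
      power2_sqrt_power)

lemma bounded_range_dilation_param:
  fixes A :: "complex^'n^'n"
  assumes "0 < t" "t < 1" "unitary A"
  shows "bounded (range (dilation_param t s A))"
proof -
  have "norm (dilation_param t s A m) \<le> 1 + \<bar>s\<bar> / (1 - t) + 2 * sqrt CARD('n)" for m
  proof -
    have "\<bar>sqrt t ^ m\<bar> \<le> 1" using assms by (simp add: power_le_one)
    moreover have "\<bar>s * (1 - t ^ m) / (1 - t)\<bar> \<le> \<bar>s\<bar> / (1 - t)"
    proof -
      have "\<bar>1 - t ^ m\<bar> \<le> 1" using assms by (simp add: power_le_one)
      then have "\<bar>s\<bar> * \<bar>1 - t ^ m\<bar> \<le> \<bar>s\<bar>" by (simp add: mult_left_le)
      then show ?thesis using assms by (simp add: abs_mult divide_right_mono)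
    qed
    moreover have "norm (dilation_param t s A m) \<le> \<bar>sqrt t ^ m\<bar> + (\<bar>s * (1 - t ^ m) / (1 - t)\<bar>
        + (norm (mat_pow A m) + norm (mat_adjoint (mat_pow A m))))"
      unfolding dilation_param_def by (smt (verit) norm_Pair_le real_norm_def)
    ultimately show ?thesis
      using assms by (simp add: norm_unitary unitary_mat_pow unitary_mat_adjoint)
  qed
  then show ?thesis unfolding bounded_iff by blast
qed

lemma conj_autmap_dilation_param_eq:
  assumes "0 < t" "t < 1" "unitary A" "m < m'"
    and "conj_autmap \<Theta> a b w B (dilation_param t s A m') (-1, 0)
       = conj_autmap \<Theta> a b w B (dilation_param t s A m) (-1, 0)"
  shows "w = 0 \<and> b * (1 - t) = s * (1 - a)"
proof -
  from assms(5) have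
    Im_eq: "(1 - a) * (s * (1 - t ^ m') / (1 - t)) + b * t ^ m'
      = (1 - a) * (s * (1 - t ^ m) / (1 - t)) + b * t ^ m" and
    translation_eq: "sqrt t ^ m' *\<^sub>R (mat_pow A m' *v w) = sqrt t ^ m *\<^sub>R (mat_pow A m *v w)"
    using assms(1) by (simp_all add: dilation_param_def conj_autmap_at_base_point complex_eq_iff
        power2_sqrt_power)
  have "sqrt t ^ m' < sqrt t ^ m" "t ^ m' < t ^ m"
    using assms by (simp_all add: power_strict_decreasing)
  moreover have "sqrt t ^ m' * norm w = sqrt t ^ m * norm w"
    using arg_cong[OF translation_eq, of norm] assms by (simp add: norm_unitary_mult unitary_mat_pow)
  ultimately have "w = 0" by simp
  have "(t ^ m - t ^ m') * (b * (1 - t) - s * (1 - a)) = 0"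
    using Im_eq assms by (simp add: field_simps)
  with \<open>t ^ m' < t ^ m\<close> \<open>w = 0\<close> show ?thesis by simp
qed

lemma dilation_constrains_elements:
  fixes \<Gamma> :: "(complex \<times> (complex^'n) \<Rightarrow> complex \<times> (complex^'n)) set"
  assumes \<Gamma>: "is_subgroup_Aut \<Theta> \<Gamma>" and discrete: "co_discrete siegel \<Gamma>"
    and t: "0 < t" "t < 1" and "unitary A" and \<phi>: "autmap \<Theta> t s 0 A \<in> \<Gamma>"
    and "a > 0" "unitary B" and \<psi>: "autmap \<Theta> a b w B \<in> \<Gamma>"
  shows "w = 0 \<and> b * (1 - t) = s * (1 - a)"
proof -
  have \<Gamma>_Aut: "\<Gamma> \<subseteq> Aut \<Theta>" and "id \<in> \<Gamma>" and comp: "\<And>f g. f \<in> \<Gamma> \<Longrightarrow> g \<in> \<Gamma> \<Longrightarrow> f \<circ> g \<in> \<Gamma>"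
    and inv: "\<And>f. f \<in> \<Gamma> \<Longrightarrow> inv f \<in> \<Gamma>"
    using \<Gamma> unfolding is_subgroup_Aut_def by auto
  define \<phi> where "\<phi> = autmap \<Theta> t s 0 A"
  define \<psi> where "\<psi> = autmap \<Theta> a b w B"
  define X where "X = dilation_param t s A"
  obtain a' b' w' B' where \<psi>_inv: "inv \<psi> = autmap \<Theta> a' b' w' B'"
    using \<Gamma>_Aut inv[OF \<psi>[folded \<psi>_def]] unfolding Aut_def by blast
  have conj: "\<phi> ^^ m \<circ> autmap \<Theta> a'' b'' w'' B'' \<circ> inv (\<phi> ^^ m) = conj_autmap \<Theta> a'' b'' w'' B'' (X m)"
    for a'' b'' w'' B'' m
    unfolding \<phi>_def X_def using t \<open>unitary A\<close> by (simp add: conj_funpow_autmap)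
  have \<phi>_pow_in: "\<phi> ^^ m \<in> \<Gamma>" for m
    by (induction m) (simp_all only: funpow.simps \<open>id \<in> \<Gamma>\<close> comp[OF \<phi>[folded \<phi>_def]])
  have "bij (\<phi> ^^ m)" for m
    unfolding \<phi>_def using t \<open>unitary A\<close> by (intro bij_betw_funpow autmap_bij)
  moreover have "bij \<psi>" unfolding \<psi>_def using \<open>a > 0\<close> \<open>unitary B\<close> by (rule autmap_bij)
  ultimately have
    GF: "conj_autmap \<Theta> a' b' w' B' (X m) \<circ> conj_autmap \<Theta> a b w B (X m) = id" and
    FG: "conj_autmap \<Theta> a b w B (X m) \<circ> conj_autmap \<Theta> a' b' w' B' (X m) = id" for m
    unfolding conj[symmetric] \<psi>_inv[symmetric] \<psi>_def[symmetric]
    by (simp_all add: conj_inverse bij_is_inj bij_is_surj flip: surj_iff)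
  have F_in: "conj_autmap \<Theta> a b w B (X m) \<in> \<Gamma>" and G_in: "conj_autmap \<Theta> a' b' w' B' (X m) \<in> \<Gamma>" for m
    using comp \<phi>_pow_in \<psi> inv by (simp_all flip: conj \<psi>_inv add: \<psi>_def)
  obtain m m' where "m < m'"
    and agree: "\<And>x. x \<in> siegel \<Longrightarrow> conj_autmap \<Theta> a b w B (X m') x = conj_autmap \<Theta> a b w B (X m) x"
    using co_discrete_family_agree[OF discrete \<open>id \<in> \<Gamma>\<close> comp continuous_on_conj_autmap
        continuous_on_conj_autmap bounded_range_dilation_param[OF t \<open>unitary A\<close>, where s = s, folded X_def]
        F_in G_in GF FG] by blast
  have "(-1, 0) \<in> siegel" by (simp add: siegel_def)
  from agree[OF this] show ?thesis
    unfolding X_def by (rule conj_autmap_dilation_param_eq[OF t \<open>unitary A\<close> \<open>m < m'\<close>])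
qed

theorem mainTheorem3:
  fixes \<Theta> :: "complex^'n^'n"
    and \<Gamma> :: "(complex \<times> (complex^'n) \<Rightarrow> complex \<times> (complex^'n)) set"
    and t s :: real and A :: "complex^'n^'n"
  assumes "skew_sym \<Theta>" and "\<Theta> \<noteq> 0"
    and "is_subgroup_Aut \<Theta> \<Gamma>" and "co_discrete siegel \<Gamma>"
    and "0 < t" and "t < 1" and "A \<in> U_Theta \<Theta>"
    and "autmap \<Theta> t s 0 A \<in> \<Gamma>"
  shows "\<forall>\<psi>\<in>\<Gamma>. \<exists>a b B. a > 0 \<and> B \<in> U_Theta \<Theta> \<and> \<psi> = autmap \<Theta> a b 0 B \<and>
           b * (1 - t) = s * (1 - a) \<and> (a \<noteq> 1 \<longrightarrow> b / (1 - a) = s / (1 - t))"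
proof
  fix \<psi> assume "\<psi> \<in> \<Gamma>"
  then obtain a b w B where "a > 0" "B \<in> U_Theta \<Theta>" and \<psi>: "\<psi> = autmap \<Theta> a b w B"
    using assms(3) unfolding is_subgroup_Aut_def Aut_def by blast
  then have "w = 0 \<and> b * (1 - t) = s * (1 - a)"
    using dilation_constrains_elements[OF assms(3-6) U_Theta_unitary[OF assms(7)] assms(8)
        \<open>a > 0\<close> U_Theta_unitary[OF \<open>B \<in> U_Theta \<Theta>\<close>]] \<open>\<psi> \<in> \<Gamma>\<close> by simp
  moreover have "a \<noteq> 1 \<longrightarrow> b / (1 - a) = s / (1 - t)"
    using calculation \<open>t < 1\<close> by (auto simp: field_simps)
  ultimately show "\<exists>a b B. a > 0 \<and> B \<in> U_Theta \<Theta> \<and> \<psi> = autmap \<Theta> a b 0 B \<and>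
           b * (1 - t) = s * (1 - a) \<and> (a \<noteq> 1 \<longrightarrow> b / (1 - a) = s / (1 - t))"
    using \<open>a > 0\<close> \<open>B \<in> U_Theta \<Theta>\<close> \<psi> by blast
qed

end
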